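(* Let $(D,\prec,\succ,\alpha)$ be a Hom-dendriform algebra and $T:D\to D$ an averaging operator on it. Define $x\prec^T_\vdash y=T(x)\prec y$, $x\prec^T_\dashv y=x\prec T(y)$, $x\succ^T_\vdash y=T(x)\succ y$, $x\succ^T_\dashv y=x\succ T(y)$ for $x,y\in D$. Then $(D,\prec^T_\vdash,\prec^T_\dashv,\succ^T_\vdash,\succ^T_\dashv,\alpha)$ is a Hom-quadri-dendriform algebra.
   Context: All vector spaces are over a field of characteristic zero. A Hom-dendriform algebra is $(D,\prec,\succ,\alpha)$ with $\prec,\succ$ bilinear on $D$ and $\alpha:D\to D$ linear such that for all $x,y,z$: $\alpha(x)\prec(y\prec z+y\succ z)=(x\prec y)\prec\alpha(z)$; $\alpha(x)\succ(y\prec z)=(x\succ y)\prec\alpha(z)$; $\alpha(x)\succ(y\succ z)=(x\prec y+x\succ y)\succ\alpha(z)$. An averaging operator on $(D,\prec,\succ,\alpha)$ is a linear map $T:D\to D$ such that for all $x,y\in D$: $Tx\prec Ty=T(Tx\prec y)=T(x\prec Ty)$, $Tx\succ Ty=T(Tx\succ y)=T(x\succ Ty)$, and $T\circ\alpha=\alpha\circ T$. A Hom-quadri-dendriform algebra is a tuple $(E,\prec_\vdash,\prec_\dashv,\succ_\vdash,\succ_\dashv,\gamma)$ with four bilinear operations on $E$ and $\gamma:E\to E$ linear such that for all $x,y,z\in E$: (Q1) $(x\prec_\vdash y)\prec_\vdash\gamma(z)=(x\prec_\dashv y)\prec_\vdash\gamma(z)=\gamma(x)\prec_\vdash(y\prec_\vdash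 z+y\succ_\vdash z)$; (Q2) $(x\succ_\vdash y)\prec_\vdash\gamma(z)=(x\succ_\dashv y)\prec_\vdash\gamma(z)=\gamma(x)\succ_\vdash(y\prec_\vdash z)$; (Q3) $\gamma(x)\succ_\vdash(y\succ_\vdash z)=(x\prec_\vdash y+x\succ_\vdash y)\succ_\vdash\gamma(z)=(x\prec_\dashv y+x\succ_\dashv y)\succ_\vdash\gamma(z)$; (Q4) $\gamma(x)\succ_\vdash(y\succ_\vdash z)=(x\prec_\dashv y+x\succ_\vdash y)\succ_\vdash\gamma(z)=(x\prec_\vdash y+x\succ_\dashv y)\succ_\vdash\gamma(z)$; (Q5) $(x\prec_\vdash y)\prec_\dashv\gamma(z)=\gamma(x)\prec_\vdash(y\prec_\dashv z+y\succ_\dashv z)$; (Q6) $(x\succ_\vdash y)\prec_\dashv\gamma(z)=\gamma(x)\succ_\vdash(y\prec_\dashv z)$; (Q7) $\gamma(x)\succ_\vdash(y\succ_\dashv z)=(x\prec_\vdash y+x\succ_\vdash y)\succ_\dashv\gamma(z)$; (Q8) $(x\prec_\dashv y)\prec_\dashv\gamma(z)=\gamma(x)\prec_\dashv(y\prec_\vdash z+y\succ_\vdash z)=\gamma(x)\prec_\dashv(y\prec_\dashv z+y\succ_\dashv z)$; (Q9) $(x\prec_\dashv y)\prec_\dashv\gamma(z)=\gamma(x)\prec_\dashv(y\prec_\vdash z+y\succ_\dashv z)=\gamma(x)\prec_\dashv(y\prec_\dashv z+y\succ_\vdash z)$; (Q10) $(x\succ_\dashv y)\prec_\dashv\gamma(z)=\gamma(x)\succ_\dashv(y\prec_\vdash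 z)=\gamma(x)\succ_\dashv(y\prec_\dashv z)$; (Q11) $\gamma(x)\succ_\dashv(y\succ_\vdash z)=\gamma(x)\succ_\dashv(y\succ_\dashv z)=(x\prec_\dashv y+x\succ_\dashv y)\succ_\dashv\gamma(z)$. *)

theory Defs
  imports Main "HOL.Vector_Spaces"
begin

definition bilinear_op :: "('k::field \<Rightarrow> 'v::ab_group_add \<Rightarrow> 'v) \<Rightarrow> ('v \<Rightarrow> 'v \<Rightarrow> 'v) \<Rightarrow> bool" where
  "bilinear_op scale m \<longleftrightarrow>
     (\<forall>x. Vector_Spaces.linear scale scale (m x)) \<and>
     (\<forall>y. Vector_Spaces.linear scale scale (\<lambda>x. m x y))"

definition hom_dendriform ::
  "('k::field \<Rightarrow> 'v::ab_group_add \<Rightarrow> 'v) \<Rightarrow> ('v \<Rightarrow> 'v \<Rightarrow> 'v) \<Rightarrow> ('v \<Rightarrow> 'v \<Rightarrow> 'v) \<Rightarrow> ('v \<Rightarrow> 'v) \<Rightarrow> bool" where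
  "hom_dendriform scale l r \<alpha> \<longleftrightarrow>
     vector_space scale \<and> bilinear_op scale l \<and> bilinear_op scale r \<and>
     Vector_Spaces.linear scale scale \<alpha> \<and>
     (\<forall>x y z.
        l (\<alpha> x) (l y z + r y z) = l (l x y) (\<alpha> z) \<and>
        r (\<alpha> x) (l y z) = l (r x y) (\<alpha> z) \<and>
        r (\<alpha> x) (r y z) = r (l x y + r x y) (\<alpha> z))"

definition averaging_operator ::
  "('k::field \<Rightarrow> 'v::ab_group_add \<Rightarrow> 'v) \<Rightarrow> ('v \<Rightarrow> 'v \<Rightarrow> 'v) \<Rightarrow> ('v \<Rightarrow> 'v \<Rightarrow> 'v) \<Rightarrow> ('v \<Rightarrow> 'v) \<Rightarrow> ('v \<Rightarrow> 'v) \<Rightarrow> bool" where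
  "averaging_operator scale l r \<alpha> T \<longleftrightarrow>
     Vector_Spaces.linear scale scale T \<and>
     (\<forall>x y.
        l (T x) (T y) = T (l (T x) y) \<and> l (T x) (T y) = T (l x (T y)) \<and>
        r (T x) (T y) = T (r (T x) y) \<and> r (T x) (T y) = T (r x (T y))) \<and>
     T \<circ> \<alpha> = \<alpha> \<circ> T"

text \<open>Hom-quadri-dendriform algebra with operations lv (prec_vdash), ld (prec_dashv),
  rv (succ_vdash), rd (succ_dashv) and twisting map g.\<close>
definition hom_quadri_dendriform ::
  "('k::field \<Rightarrow> 'v::ab_group_add \<Rightarrow> 'v) \<Rightarrow> ('v \<Rightarrow> 'v \<Rightarrow> 'v) \<Rightarrow> ('v \<Rightarrow> 'v \<Rightarrow> 'v) \<Rightarrow>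
   ('v \<Rightarrow> 'v \<Rightarrow> 'v) \<Rightarrow> ('v \<Rightarrow> 'v \<Rightarrow> 'v) \<Rightarrow> ('v \<Rightarrow> 'v) \<Rightarrow> bool" where
  "hom_quadri_dendriform scale lv ld rv rd g \<longleftrightarrow>
     vector_space scale \<and> bilinear_op scale lv \<and> bilinear_op scale ld \<and>
     bilinear_op scale rv \<and> bilinear_op scale rd \<and> Vector_Spaces.linear scale scale g \<and>
     (\<forall>x y z.
       \<comment> \<open>Q1\<close>
       lv (lv x y) (g z) = lv (ld x y) (g z) \<and>
       lv (ld x y) (g z) = lv (g x) (lv y z + rv y z) \<and>
       \<comment> \<open>Q2\<close>
       lv (rv x y) (g z) = lv (rd x y) (g z) \<and>
       lv (rd x y) (g z) = rv (g x) (lv y z) \<and>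
       \<comment> \<open>Q3\<close>
       rv (g x) (rv y z) = rv (lv x y + rv x y) (g z) \<and>
       rv (lv x y + rv x y) (g z) = rv (ld x y + rd x y) (g z) \<and>
       \<comment> \<open>Q4\<close>
       rv (g x) (rv y z) = rv (ld x y + rv x y) (g z) \<and>
       rv (ld x y + rv x y) (g z) = rv (lv x y + rd x y) (g z) \<and>
       \<comment> \<open>Q5\<close>
       ld (lv x y) (g z) = lv (g x) (ld y z + rd y z) \<and>
       \<comment> \<open>Q6\<close>
       ld (rv x y) (g z) = rv (g x) (ld y z) \<and>
       \<comment> \<open>Q7\<close>
       rv (g x) (rd y z) = rd (lv x y + rv x y) (g z) \<and>
       \<comment> \<open>Q8\<close>
       ld (ld x y) (g z) = ld (g x) (lv y z + rv y z) \<and>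
       ld (g x) (lv y z + rv y z) = ld (g x) (ld y z + rd y z) \<and>
       \<comment> \<open>Q9\<close>
       ld (ld x y) (g z) = ld (g x) (lv y z + rd y z) \<and>
       ld (g x) (lv y z + rd y z) = ld (g x) (ld y z + rv y z) \<and>
       \<comment> \<open>Q10\<close>
       ld (rd x y) (g z) = rd (g x) (lv y z) \<and>
       rd (g x) (lv y z) = rd (g x) (ld y z) \<and>
       \<comment> \<open>Q11\<close>
       rd (g x) (rv y z) = rd (g x) (rd y z) \<and>
       rd (g x) (rd y z) = rd (ld x y + rd x y) (g z))"

end

theory Submission
  imports Defs
begin

text \<open>Applying T to a mixed product absorbs it into the product of T-images, and T commutes
  with the twisting map; so every word of Q1--Q11 in the new operations becomes a word in the old
  operations on T x, T y and z, where it is an instance of the three Hom-dendriform axioms.\<close>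

lemma bilinear_op_precompose:
  assumes "bilinear_op scale m" and "Vector_Spaces.linear scale scale T"
  shows bilinear_op_precompose_left: "bilinear_op scale (\<lambda>x y. m (T x) y)"
    and bilinear_op_precompose_right: "bilinear_op scale (\<lambda>x y. m x (T y))"
proof -
  have left: "Vector_Spaces.linear scale scale (m x)"
    and right: "Vector_Spaces.linear scale scale (\<lambda>x. m x y)" for x y
    using assms(1) unfolding bilinear_op_def by auto
  have "Vector_Spaces.linear scale scale ((\<lambda>x. m x y) \<circ> T)"
    and "Vector_Spaces.linear scale scale (m x \<circ> T)" for x y
    using Vector_Spaces.linear_compose[OF assms(2)] left right by blast+
  with left right show "bilinear_op scale (\<lambda>x y. m (T x) y)" "bilinear_op scale (\<lambda>x y. m x (T y))"
    unfolding bilinear_op_def by (simp_all add: comp_def)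
qed

lemma hom_dendriformD:
  assumes "hom_dendriform scale l r \<alpha>"
  shows "vector_space scale" "bilinear_op scale l" "bilinear_op scale r"
    and "Vector_Spaces.linear scale scale \<alpha>"
    and "l (\<alpha> x) (l y z + r y z) = l (l x y) (\<alpha> z)"
    and "r (\<alpha> x) (l y z) = l (r x y) (\<alpha> z)"
    and "r (\<alpha> x) (r y z) = r (l x y + r x y) (\<alpha> z)"
  using assms unfolding hom_dendriform_def by auto

lemma averaging_operatorD:
  assumes "averaging_operator scale l r \<alpha> T"
  shows "Vector_Spaces.linear scale scale T"
    and "T (l (T x) y) = l (T x) (T y)" "T (l x (T y)) = l (T x) (T y)"
    and "T (r (T x) y) = r (T x) (T y)" "T (r x (T y)) = r (T x) (T y)"
    and "T (\<alpha> x) = \<alpha> (T x)"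
  using assms unfolding averaging_operator_def by (metis comp_apply)+

lemma averaging_operator_add:
  assumes "averaging_operator scale l r \<alpha> T"
  shows "T (x + y) = T x + T y"
  using averaging_operatorD(1)[OF assms]
  by (simp add: Vector_Spaces.linear_def module_hom_def module_hom_axioms_def)

theorem corollary3p12:
  fixes scale :: "'k::field_char_0 \<Rightarrow> 'v::ab_group_add \<Rightarrow> 'v"
    and l r :: "'v \<Rightarrow> 'v \<Rightarrow> 'v" and \<alpha> T :: "'v \<Rightarrow> 'v"
  assumes "hom_dendriform scale l r \<alpha>"
    and "averaging_operator scale l r \<alpha> T"
  shows "hom_quadri_dendriform scale
           (\<lambda>x y. l (T x) y) (\<lambda>x y. l x (T y)) (\<lambda>x y. r (T x) y) (\<lambda>x y. r x (T y)) \<alpha>"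
proof -
  note dend = hom_dendriformD[OF assms(1)]
  note avg = averaging_operatorD[OF assms(2)]
  show ?thesis
    unfolding hom_quadri_dendriform_def
    using dend(1,4) bilinear_op_precompose[OF dend(2) avg(1)]
      bilinear_op_precompose[OF dend(3) avg(1)]
    by (simp add: avg(2-6) averaging_operator_add[OF assms(2)] dend(5-7))
qed

end
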